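(* For every integer $n\ge 3$, $$f(n,\mathcal{B}(2K_2))=2^n-\binom{n}{2}-n-1.$$
   Context: $2K_2$ is the graph consisting of two disjoint edges. For a graph $G$, a hypergraph $H$ is a Berge-$G$ hypergraph if there are an injective map $\phi:V(G)\to V(H)$ and pairwise distinct hyperedges $e_{xy}\in E(H)$, one for each $xy\in E(G)$, with $\phi(x),\phi(y)\in e_{xy}$. $\mathcal{B}(G)$ denotes the family of all Berge-$G$ hypergraphs. For a positive integer $n$ and a graph $G$, $f(n,\mathcal{B}(G))$ is the smallest number of colors in a coloring of all subsets of $[n]=\{1,\dots,n\}$ (i.e. of $2^{[n]}$) such that there is no monochromatic Berge-$G$ hypergraph, i.e. no color class, viewed as a (non-uniform) hypergraph on $[n]$, contains a Berge-$G$ subhypergraph. *)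

theory Defs
  imports Main
begin

text \<open>A (simple) graph is given by a vertex set V and an edge set E of 2-element subsets of V.\<close>

definition contains_berge :: "'v set \<Rightarrow> 'v set set \<Rightarrow> 'a set set \<Rightarrow> bool" where
  "contains_berge V E H \<longleftrightarrow>
     (\<exists>(phi :: 'v \<Rightarrow> 'a) (e :: 'v set \<Rightarrow> 'a set).
        inj_on phi V \<and> inj_on e E \<and> e ` E \<subseteq> H \<and>
        (\<forall>x\<in>V. \<forall>y\<in>V. {x, y} \<in> E \<longrightarrow> phi x \<in> e {x, y} \<and> phi y \<in> e {x, y}))"

definition two_K2_V :: "nat set" where "two_K2_V = {0, 1, 2, 3}"
definition two_K2_E :: "nat set set" where "two_K2_E = {{0, 1}, {2, 3}}"

definition f_berge :: "nat \<Rightarrow> 'v set \<Rightarrow> 'v set set \<Rightarrow> nat" where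
  "f_berge n V E = (LEAST k. \<exists>c :: nat set \<Rightarrow> nat.
      (\<forall>A\<in>Pow {1..n}. c A < k) \<and>
      (\<forall>i<k. \<not> contains_berge V E {A \<in> Pow {1..n}. c A = i}))"

end

theory Submission
  imports Defs
begin

text \<open>A colour class contains a Berge-$2K_2$ exactly when it has two distinct members $A$, $B$
  with two points of $A$ and two further points of $B$, all four distinct. Two distinct sets of
  size at least 3 always have this property, so every set of size at least 3 needs a colour of
  its own. Conversely these colours suffice: give every smaller set the colour of a 3-set
  containing it. A colour class then lies inside a single set $U$; if $|U| = 3$ it cannot hold
  four distinct points, and if $|U| > 3$ the class is $\{U\}$.\<close>

lemma contains_berge_two_K2E:
  assumes "contains_berge two_K2_V two_K2_E H"
  obtains A B a b c d where "A \<in> H" "B \<in> H" "A \<noteq> B"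
    "a \<in> A" "b \<in> A" "c \<in> B" "d \<in> B" "distinct [a, b, c, d]"
proof -
  obtain phi e where phi: "inj_on phi {0, 1, 2, 3}" and e: "inj_on e {{0, 1}, {2, 3}}"
    and eH: "e ` {{0, 1}, {2, 3}} \<subseteq> H"
    and hit: "\<forall>x\<in>{0, 1, 2, 3}. \<forall>y\<in>{0, 1, 2, 3}.
                {x, y} \<in> {{0::nat, 1}, {2, 3}} \<longrightarrow> phi x \<in> e {x, y} \<and> phi y \<in> e {x, y}"
    using assms unfolding contains_berge_def two_K2_V_def two_K2_E_def
    by (elim exE conjE) (rule that; assumption)
  have "e {0, 1} \<noteq> e {2, 3}"
    using e by (auto simp: inj_on_def doubleton_eq_iff)
  moreover have "distinct [phi 0, phi 1, phi 2, phi 3]"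
    using phi by (auto simp: inj_on_def)
  moreover have "phi 0 \<in> e {0, 1}" "phi 1 \<in> e {0, 1}" "phi 2 \<in> e {2, 3}" "phi 3 \<in> e {2, 3}"
    using hit[rule_format, of 0 1] hit[rule_format, of 2 3] by auto
  moreover have "e {0, 1} \<in> H" "e {2, 3} \<in> H"
    using eH by auto
  ultimately show thesis
    using that by blast
qed

lemma contains_berge_two_K2I:
  assumes AB: "A \<in> H" "B \<in> H" "A \<noteq> B"
    and abcd: "a \<in> A" "b \<in> A" "c \<in> B" "d \<in> B" "distinct [a, b, c, d]"
  shows "contains_berge two_K2_V two_K2_E H"
proof -
  define e where "e = (\<lambda>S::nat set. if S = {0, 1} then A else B)"
  have "{0::nat, 1} \<noteq> {2, 3}"
    by (auto simp: doubleton_eq_iff)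
  then have e: "inj_on e {{0, 1}, {2, 3}}" "e ` {{0, 1}, {2, 3}} \<subseteq> H"
    using AB by (auto simp: e_def)
  have phi: "inj_on (nth [a, b, c, d]) {0, 1, 2, 3}"
    using abcd(5) by (rule inj_on_nth) simp
  have hit: "[a, b, c, d] ! x \<in> e {x, y} \<and> [a, b, c, d] ! y \<in> e {x, y}"
    if "{x, y} \<in> {{0, 1}, {2, 3}}" for x y :: nat
  proof -
    from that consider "x \<in> {0, 1}" "y \<in> {0, 1}" "e {x, y} = A"
      | "x \<in> {2, 3}" "y \<in> {2, 3}" "e {x, y} = B"
      unfolding e_def by (auto simp: doubleton_eq_iff)
    then show ?thesis
      by cases (use abcd in auto)
  qed
  show ?thesis
    unfolding contains_berge_def two_K2_V_def two_K2_E_def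
    by (intro exI[of _ "nth [a, b, c, d]"] exI[of _ e] conjI phi e ballI impI hit)
qed

lemma card_ge_2_two_elements:
  assumes "finite A" "2 \<le> card A"
  shows "\<exists>a\<in>A. \<exists>b\<in>A. a \<noteq> b"
  using assms card_le_Suc0_iff_eq[of A] by auto

lemma two_disjoint_pairs_if_card_ge_3:
  assumes "finite A" "finite B" "3 \<le> card A" "3 \<le> card B" "A \<noteq> B"
  shows "\<exists>a b c d. a \<in> A \<and> b \<in> A \<and> c \<in> B \<and> d \<in> B \<and> distinct [a, b, c, d]"
proof -
  have outside: "\<exists>a b c d. a \<in> A \<and> b \<in> A \<and> c \<in> B \<and> d \<in> B \<and> distinct [a, b, c, d]"
    if hyps: "finite A" "finite B" "3 \<le> card A" "3 \<le> card B" "c \<in> B" "c \<notin> A" for A B c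
  proof -
    have "2 \<le> card (B - {c})"
      using hyps by simp
    then obtain d where d: "d \<in> B" "d \<noteq> c"
      using card_ge_2_two_elements[of "B - {c}"] hyps by auto
    have "2 \<le> card (A - {d})"
      using hyps by (cases "d \<in> A") auto
    then obtain a b where "a \<in> A - {d}" "b \<in> A - {d}" "a \<noteq> b"
      using card_ge_2_two_elements[of "A - {d}"] hyps by auto
    then show ?thesis
      using hyps d by (intro exI[of _ a] exI[of _ b] exI[of _ c] exI[of _ d]) auto
  qed
  show ?thesis
  proof (cases "B \<subseteq> A")
    case False
    then obtain c where "c \<in> B" "c \<notin> A"
      by blast
    then show ?thesis
      using outside[OF assms(1-4)] by blast
  next
    case True
    with assms(5) obtain c where "c \<in> A" "c \<notin> B"
      by blast
    then obtain a b c d where "a \<in> B" "b \<in> B" "c \<in> A" "d \<in> A" "distinct [a, b, c, d]"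
      using outside[OF assms(2,1,4,3)] by blast
    then show ?thesis
      by (intro exI[of _ c] exI[of _ d] exI[of _ a] exI[of _ b]) auto
  qed
qed

lemma card_Pow_card_less:
  assumes "finite S"
  shows "card {A \<in> Pow S. card A < k} = (\<Sum>j<k. card S choose j)"
proof (induction k)
  case (Suc k)
  have "{A \<in> Pow S. card A < Suc k} = {A \<in> Pow S. card A < k} \<union> {A. A \<subseteq> S \<and> card A = k}"
    by auto
  moreover have "card {A. A \<subseteq> S \<and> card A = k} = card S choose k"
    using assms by (rule n_subsets)
  moreover have "card ({A \<in> Pow S. card A < k} \<union> {A. A \<subseteq> S \<and> card A = k}) =
      card {A \<in> Pow S. card A < k} + card {A. A \<subseteq> S \<and> card A = k}"
    using assms by (intro card_Un_disjoint) auto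
  ultimately show ?case
    using Suc by simp
qed simp

lemma card_Pow_card_ge_3:
  assumes "finite S"
  shows "card {A \<in> Pow S. 3 \<le> card A} = 2 ^ card S - (card S choose 2) - card S - 1"
proof -
  have "card {A \<in> Pow S. 3 \<le> card A} = card (Pow S - {A \<in> Pow S. card A < 3})"
    by (rule arg_cong[of _ _ card]) auto
  also have "\<dots> = card (Pow S) - card {A \<in> Pow S. card A < 3}"
    using assms by (intro card_Diff_subset) auto
  also have "card {A \<in> Pow S. card A < 3} = 1 + card S + (card S choose 2)"
    using card_Pow_card_less[OF assms, of 3] by (simp add: eval_nat_numeral)
  finally show ?thesis
    using assms by (simp add: card_Pow)
qed

lemma card_ge_3_le_berge_two_K2_free_colours:
  assumes col: "\<forall>A\<in>Pow S. col A < k"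
    and free: "\<forall>i<k. \<not> contains_berge two_K2_V two_K2_E {A \<in> Pow S. col A = i}"
    and "finite S"
  shows "card {A \<in> Pow S. 3 \<le> card A} \<le> k"
proof -
  let ?L = "{A \<in> Pow S. 3 \<le> card A}"
  have "inj_on col ?L"
  proof (rule inj_onI, rule ccontr)
    fix A B
    assume A: "A \<in> ?L" and B: "B \<in> ?L" and same: "col A = col B" and "A \<noteq> B"
    have "finite A" "finite B"
      using A B \<open>finite S\<close> finite_subset by auto
    then obtain a b c d where "a \<in> A" "b \<in> A" "c \<in> B" "d \<in> B" "distinct [a, b, c, d]"
      using two_disjoint_pairs_if_card_ge_3[of A B] A B \<open>A \<noteq> B\<close> by auto
    moreover have "A \<in> {X \<in> Pow S. col X = col A}" "B \<in> {X \<in> Pow S. col X = col A}"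
      using A B same by auto
    ultimately have "contains_berge two_K2_V two_K2_E {X \<in> Pow S. col X = col A}"
      using \<open>A \<noteq> B\<close> by (intro contains_berge_two_K2I)
    moreover have "col A < k"
      using A col by auto
    ultimately show False
      using free by blast
  qed
  moreover have "col ` ?L \<subseteq> {..<k}"
    using col by auto
  ultimately have "card ?L \<le> card {..<k}"
    by (intro card_inj_on_le) auto
  then show ?thesis
    by simp
qed

lemma berge_two_K2_free_colouring_exists:
  assumes "finite S" "3 \<le> card S"
  shows "\<exists>col :: 'a set \<Rightarrow> nat.
      (\<forall>A\<in>Pow S. col A < card {A \<in> Pow S. 3 \<le> card A}) \<and>
      (\<forall>i. \<not> contains_berge two_K2_V two_K2_E {A \<in> Pow S. col A = i})"
proof -
  let ?L = "{A \<in> Pow S. 3 \<le> card A}"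
  have "finite ?L"
    using \<open>finite S\<close> by simp
  then obtain g where g: "bij_betw g ?L {0..<card ?L}"
    using ex_bij_betw_finite_nat by blast
  let ?extends = "\<lambda>A T. T \<in> ?L \<and> A \<subseteq> T \<and> (3 \<le> card A \<longrightarrow> T = A) \<and> (card A < 3 \<longrightarrow> card T = 3)"
  have extension: "\<exists>T. ?extends A T" if A: "A \<in> Pow S" for A
  proof (cases "3 \<le> card A")
    case True
    with A show ?thesis
      by (intro exI[of _ A]) auto
  next
    case False
    then obtain T where "A \<subseteq> T" "T \<subseteq> S" "card T = 3"
      using exists_subset_between[of A 3 S] A assms by auto
    with False show ?thesis
      by (intro exI[of _ T]) auto
  qed
  define U where "U A = (SOME T. ?extends A T)" for A
  have U: "?extends A (U A)" if "A \<in> Pow S" for A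
    unfolding U_def by (rule someI_ex) (rule extension[OF that])
  define col where "col A = g (U A)" for A
  have "col A < card ?L" if "A \<in> Pow S" for A
    using bij_betwE[OF g] U[OF that] by (auto simp: col_def)
  moreover have "\<not> contains_berge two_K2_V two_K2_E {A \<in> Pow S. col A = i}" for i
  proof
    assume "contains_berge two_K2_V two_K2_E {A \<in> Pow S. col A = i}"
    then obtain A B a b c d where A: "A \<in> Pow S" "col A = i" and B: "B \<in> Pow S" "col B = i"
      and "A \<noteq> B" and abcd: "a \<in> A" "b \<in> A" "c \<in> B" "d \<in> B" "distinct [a, b, c, d]"
      by (elim contains_berge_two_K2E) blast
    have "U A = U B"
      using inj_onD[OF bij_betw_imp_inj_on[OF g]] U[OF A(1)] U[OF B(1)] A B by (simp add: col_def)
    then have "set [a, b, c, d] \<subseteq> U A"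
      using abcd U[OF A(1)] U[OF B(1)] by auto
    moreover have "finite (U A)"
      using U[OF A(1)] \<open>finite S\<close> finite_subset by auto
    ultimately have "card (set [a, b, c, d]) \<le> card (U A)"
      by (rule card_mono[rotated])
    then have "4 \<le> card (U A)"
      using distinct_card[OF abcd(5)] by simp
    then have "U A = A" "U B = B"
      using U[OF A(1)] U[OF B(1)] \<open>U A = U B\<close> by auto
    with \<open>U A = U B\<close> \<open>A \<noteq> B\<close> show False
      by simp
  qed
  ultimately show ?thesis
    by blast
qed

theorem theorem3:
  fixes n :: nat
  assumes "n \<ge> 3"
  shows "f_berge n two_K2_V two_K2_E = 2 ^ n - (n choose 2) - n - 1"
proof -
  let ?L = "{A \<in> Pow {1..n}. 3 \<le> card A}"
  have "f_berge n two_K2_V two_K2_E = card ?L"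
    unfolding f_berge_def
  proof (rule Least_equality)
    show "\<exists>c :: nat set \<Rightarrow> nat. (\<forall>A\<in>Pow {1..n}. c A < card ?L) \<and>
      (\<forall>i<card ?L. \<not> contains_berge two_K2_V two_K2_E {A \<in> Pow {1..n}. c A = i})"
      using berge_two_K2_free_colouring_exists[of "{1..n}"] assms by auto
  next
    fix k
    assume "\<exists>c :: nat set \<Rightarrow> nat. (\<forall>A\<in>Pow {1..n}. c A < k) \<and>
      (\<forall>i<k. \<not> contains_berge two_K2_V two_K2_E {A \<in> Pow {1..n}. c A = i})"
    then show "card ?L \<le> k"
      using card_ge_3_le_berge_two_K2_free_colours by blast
  qed
  then show ?thesis
    using card_Pow_card_ge_3[of "{1..n}"] by simp
qed

end
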